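(* Let $x,y \in A$ be a regular exact pair of zero divisors. Furthermore, let $a,b \in A$ be elements such that $a$ or $b$ is weakly regular on the $A$-module $A/(x,y)$. Then the $A$-submodule \[ Q_{\eta_b,\gamma_a} = \big\{\, \psi \in \operatorname{M}_2(A) \,\big|\, \psi\eta_b=\gamma_a\xi \text{ for some } \xi \in \operatorname{M}_2(A) \,\big\} \] of $\operatorname{M}_2(A)$ is generated by the following five matrices: \[ \psi_1 = \begin{pmatrix} 0 & 1 \\ 0 & 0 \end{pmatrix},\ \psi_2 = \begin{pmatrix} 0 & 0 \\ x & b \end{pmatrix},\ \psi_3 = \begin{pmatrix} 0 & 0 \\ 0 & y \end{pmatrix},\ \psi_4 = \begin{pmatrix} x & 0 \\ 0 & 0 \end{pmatrix},\ \psi_5 = \begin{pmatrix} a & 0 \\ y & 0 \end{pmatrix}. \]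
   Context: $A$ is a commutative noetherian local ring. Two non-units $x,y\in A$ form an exact pair of zero divisors if $\operatorname{Ann}_A(x)=(y)$ and $\operatorname{Ann}_A(y)=(x)$; the pair is regular if moreover $(x)\cap(y)=0$ (equivalently, $x$ is regular on $A/(y)$, equivalently $y$ is regular on $A/(x)$). An element $a$ is weakly regular on an $A$-module $M$ if multiplication by $a$ on $M$ is injective. For $c\in A$, $\gamma_c$ and $\eta_c$ are the $2\times 2$ matrices $\gamma_c=\begin{pmatrix} x & c\\ 0 & y\end{pmatrix}$ and $\eta_c=\begin{pmatrix} y & -c\\ 0 & x\end{pmatrix}$, and $\operatorname{M}_2(A)$ denotes the $A$-module of $2\times 2$ matrices over $A$. *)

theory Defs
  imports "HOL-Analysis.Analysis"
begin

definition is_ideal :: "'a::comm_ring_1 set \<Rightarrow> bool" where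
  "is_ideal I \<longleftrightarrow> 0 \<in> I \<and> (\<forall>u\<in>I. \<forall>v\<in>I. u + v \<in> I) \<and> (\<forall>r. \<forall>u\<in>I. r * u \<in> I)"

definition gen_ideal :: "'a::comm_ring_1 set \<Rightarrow> 'a set" where
  "gen_ideal S = {t. \<exists>r. t = (\<Sum>s\<in>S. r s * s)}"

definition noetherian_ring :: "'a::comm_ring_1 itself \<Rightarrow> bool" where
  "noetherian_ring _ \<longleftrightarrow> (\<forall>I::'a set. is_ideal I \<longrightarrow> (\<exists>S. finite S \<and> I = gen_ideal S))"

definition maximal_ideal :: "'a::comm_ring_1 set \<Rightarrow> bool" where
  "maximal_ideal m \<longleftrightarrow> is_ideal m \<and> m \<noteq> UNIV \<and>
     (\<forall>J. is_ideal J \<and> m \<subseteq> J \<longrightarrow> J = m \<or> J = UNIV)"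

definition local_ring :: "'a::comm_ring_1 itself \<Rightarrow> bool" where
  "local_ring _ \<longleftrightarrow> (\<exists>!m::'a set. maximal_ideal m)"

definition Ann :: "'a::comm_ring_1 \<Rightarrow> 'a set" where
  "Ann x = {r. r * x = 0}"

definition pideal :: "'a::comm_ring_1 \<Rightarrow> 'a set" where
  "pideal x = {r * x | r. True}"

definition ideal2 :: "'a::comm_ring_1 \<Rightarrow> 'a \<Rightarrow> 'a set" where
  "ideal2 x y = {r * x + s * y | r s. True}"

definition exact_pair :: "'a::comm_ring_1 \<Rightarrow> 'a \<Rightarrow> bool" where
  "exact_pair x y \<longleftrightarrow> \<not> x dvd 1 \<and> \<not> y dvd 1 \<and> Ann x = pideal y \<and> Ann y = pideal x"

definition regular_exact_pair :: "'a::comm_ring_1 \<Rightarrow> 'a \<Rightarrow> bool" where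
  "regular_exact_pair x y \<longleftrightarrow> exact_pair x y \<and> pideal x \<inter> pideal y = {0}"

text \<open>a is weakly regular on the module A/I: multiplication by a on A/I is injective,
  i.e. a*m \<in> I implies m \<in> I.\<close>
definition weakly_regular_quot :: "'a::comm_ring_1 \<Rightarrow> 'a set \<Rightarrow> bool" where
  "weakly_regular_quot a I \<longleftrightarrow> (\<forall>m. a * m \<in> I \<longrightarrow> m \<in> I)"

definition mat2 :: "'a::zero \<Rightarrow> 'a \<Rightarrow> 'a \<Rightarrow> 'a \<Rightarrow> 'a^2^2" where
  "mat2 p q r s = (\<chi> i j. if i = 1 then (if j = 1 then p else q) else (if j = 1 then r else s))"

definition mscale :: "'a::times \<Rightarrow> 'a^2^2 \<Rightarrow> 'a^2^2" where
  "mscale c M = (\<chi> i j. c * (M $ i $ j))"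

definition gamma_mat :: "'a::comm_ring_1 \<Rightarrow> 'a \<Rightarrow> 'a \<Rightarrow> 'a^2^2" where
  "gamma_mat x y c = mat2 x c 0 y"

definition eta_mat :: "'a::comm_ring_1 \<Rightarrow> 'a \<Rightarrow> 'a \<Rightarrow> 'a^2^2" where
  "eta_mat x y c = mat2 y (- c) 0 x"

definition Qset :: "'a::comm_ring_1^2^2 \<Rightarrow> 'a^2^2 \<Rightarrow> ('a^2^2) set" where
  "Qset eta gamma = {psi. \<exists>xi. psi ** eta = gamma ** xi}"

definition span_mats :: "('a::comm_ring_1^2^2) list \<Rightarrow> ('a^2^2) set" where
  "span_mats Ms = {M. \<exists>c. M = (\<Sum>i<length Ms. mscale (c i) (Ms ! i))}"

end

theory Submission
  imports Defs
begin

text \<open>Write \<open>\<psi> = (p q; r s)\<close> and \<open>\<xi> = (e f; g h)\<close>, so that \<open>\<psi>\<eta>\<^sub>b = \<gamma>\<^sub>a\<xi>\<close> is a system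
  of four scalar equations. The (2,1) equation \<open>r y = y g\<close> says \<open>g \<equiv> r\<close> modulo \<open>x\<close>, since
  \<open>Ann y = (x)\<close>. If \<open>a\<close> is weakly regular on \<open>A/(x,y)\<close>, the (1,1) equation \<open>p y = x e + a g\<close>
  puts \<open>g\<close> into \<open>(x,y)\<close>; if \<open>b\<close> is, the (2,2) equation \<open>s x - r b = y h\<close> puts \<open>r\<close> there.
  Either way \<open>r = u x + v y\<close> and \<open>g \<equiv> v y\<close> modulo \<open>x\<close>. The same two equations then give
  \<open>(p - a v) y \<in> (x)\<close> and \<open>(s - u b) x \<in> (y)\<close>, and regularity of the pair cancels \<open>y\<close>
  resp. \<open>x\<close>: these are the coefficients of \<open>\<psi>\<^sub>1, \<dots>, \<psi>\<^sub>5\<close>. Conversely, for \<open>\<psi>\<close> in the span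
  the four equations are solved directly, using \<open>x y = 0\<close>.\<close>

lemma mat2_eq_iff:
  "mat2 p q r s = (mat2 p' q' r' s' :: 'a::zero^2^2) \<longleftrightarrow> p = p' \<and> q = q' \<and> r = r' \<and> s = s'"
  by (simp add: mat2_def vec_eq_iff forall_2)

lemma mat2_cases:
  fixes M :: "'a::zero^2^2"
  obtains p q r s where "M = mat2 p q r s"
proof
  show "M = mat2 (M$1$1) (M$1$2) (M$2$1) (M$2$2)"
    by (simp add: mat2_def vec_eq_iff forall_2)
qed

lemma mat2_mult_mat2:
  "mat2 p q r s ** mat2 p' q' r' s' =
   (mat2 (p * p' + q * r') (p * q' + q * s') (r * p' + s * r') (r * q' + s * s') :: 'a::comm_ring_1^2^2)"
  by (simp add: mat2_def vec_eq_iff forall_2 matrix_matrix_mult_def sum_2)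

lemma mat2_add_mat2:
  "mat2 p q r s + mat2 p' q' r' s' = (mat2 (p + p') (q + q') (r + r') (s + s') :: 'a::comm_ring_1^2^2)"
  by (simp add: mat2_def vec_eq_iff forall_2)

lemma mscale_mat2: "mscale c (mat2 p q r s) = mat2 (c * p) (c * q) (c * r) (c * s)"
  by (simp add: mat2_def mscale_def vec_eq_iff forall_2)

lemma mat2_in_Qset_eta_gamma_iff:
  "mat2 p q r s \<in> Qset (eta_mat x y b) (gamma_mat x y a) \<longleftrightarrow>
   (\<exists>e f g h. p * y = x * e + a * g \<and> - p * b + q * x = x * f + a * h \<and>
              r * y = y * g \<and> - r * b + s * x = y * h)"
proof -
  have "mat2 p q r s \<in> Qset (eta_mat x y b) (gamma_mat x y a) \<longleftrightarrow>
        (\<exists>e f g h. mat2 p q r s ** eta_mat x y b = gamma_mat x y a ** mat2 e f g h)"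
    unfolding Qset_def mem_Collect_eq
  proof
    assume "\<exists>\<xi>. mat2 p q r s ** eta_mat x y b = gamma_mat x y a ** \<xi>"
    then obtain \<xi> where "mat2 p q r s ** eta_mat x y b = gamma_mat x y a ** \<xi>" ..
    moreover obtain e f g h where "\<xi> = mat2 e f g h"
      by (rule mat2_cases)
    ultimately show "\<exists>e f g h. mat2 p q r s ** eta_mat x y b = gamma_mat x y a ** mat2 e f g h"
      by blast
  qed blast
  also have "\<dots> \<longleftrightarrow> (\<exists>e f g h. p * y = x * e + a * g \<and> - p * b + q * x = x * f + a * h \<and>
                                r * y = y * g \<and> - r * b + s * x = y * h)"
    by (simp add: eta_mat_def gamma_mat_def mat2_mult_mat2 mat2_eq_iff)
  finally show ?thesis .
qed

lemma mat2_in_span_mats_iff: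
  "mat2 p q r s \<in> span_mats [mat2 0 1 0 0, mat2 0 0 x b, mat2 0 0 0 y, mat2 x 0 0 0, mat2 a 0 y 0] \<longleftrightarrow>
   (\<exists>c\<^sub>1 c\<^sub>2 c\<^sub>3 c\<^sub>4 c\<^sub>5. p = c\<^sub>4 * x + c\<^sub>5 * a \<and> q = c\<^sub>1 \<and> r = c\<^sub>2 * x + c\<^sub>5 * y \<and> s = c\<^sub>2 * b + c\<^sub>3 * y)"
  (is "_ \<in> span_mats ?\<psi> \<longleftrightarrow> (\<exists>c\<^sub>1 c\<^sub>2 c\<^sub>3 c\<^sub>4 c\<^sub>5. ?P c\<^sub>1 c\<^sub>2 c\<^sub>3 c\<^sub>4 c\<^sub>5)")
proof -
  have sum_eq: "(\<Sum>i<length ?\<psi>. mscale (c i) (?\<psi> ! i))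
      = mat2 (c 3 * x + c 4 * a) (c 0) (c 1 * x + c 4 * y) (c 1 * b + c 2 * y)" for c
    by (simp add: numeral_eq_Suc lessThan_Suc mscale_mat2 mat2_add_mat2 algebra_simps)
  have "mat2 p q r s \<in> span_mats ?\<psi> \<longleftrightarrow> (\<exists>c::nat \<Rightarrow> 'a. ?P (c 0) (c 1) (c 2) (c 3) (c 4))"
    unfolding span_mats_def sum_eq mem_Collect_eq mat2_eq_iff by blast
  also have "\<dots> \<longleftrightarrow> (\<exists>c\<^sub>1 c\<^sub>2 c\<^sub>3 c\<^sub>4 c\<^sub>5. ?P c\<^sub>1 c\<^sub>2 c\<^sub>3 c\<^sub>4 c\<^sub>5)"
  proof
    assume "\<exists>c\<^sub>1 c\<^sub>2 c\<^sub>3 c\<^sub>4 c\<^sub>5. ?P c\<^sub>1 c\<^sub>2 c\<^sub>3 c\<^sub>4 c\<^sub>5"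
    then obtain c\<^sub>1 c\<^sub>2 c\<^sub>3 c\<^sub>4 c\<^sub>5 where "?P c\<^sub>1 c\<^sub>2 c\<^sub>3 c\<^sub>4 c\<^sub>5" by blast
    then show "\<exists>c::nat \<Rightarrow> 'a. ?P (c 0) (c 1) (c 2) (c 3) (c 4)"
      by (intro exI[of _ "(!) [c\<^sub>1, c\<^sub>2, c\<^sub>3, c\<^sub>4, c\<^sub>5]"]) (simp add: numeral_eq_Suc)
  qed blast
  finally show ?thesis .
qed

lemma regular_exact_pair_sym: "regular_exact_pair x y \<Longrightarrow> regular_exact_pair y x"
  unfolding regular_exact_pair_def exact_pair_def by (simp add: Int_commute)

lemma regular_exact_pair_mult_eq_0:
  assumes "regular_exact_pair x y"
  shows "x * y = 0"
proof -
  have "y = 1 * y"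
    by simp
  then have "y \<in> pideal y"
    unfolding pideal_def by blast
  also have "pideal y = Ann x"
    using assms unfolding regular_exact_pair_def exact_pair_def by simp
  finally show ?thesis
    by (simp add: Ann_def mult.commute)
qed

lemma regular_exact_pair_dvd_cancel:
  assumes "regular_exact_pair x y" and "x dvd z * y"
  shows "x dvd z"
proof -
  from assms(2) obtain k where "z * y = k * x"
    by (auto simp: dvd_def mult.commute)
  then have "z * y \<in> pideal x \<inter> pideal y"
    unfolding pideal_def by blast
  then have "z \<in> Ann y"
    using assms(1) unfolding regular_exact_pair_def Ann_def by simp
  also have "Ann y = pideal x"
    using assms(1) unfolding regular_exact_pair_def exact_pair_def by simp
  finally have "z \<in> pideal x" .
  then show ?thesis
    unfolding pideal_def by auto
qed

lemma weakly_regular_quot_ideal2E: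
  assumes "weakly_regular_quot c (ideal2 x y)" and "c * m = k * x + l * y"
  obtains u v where "m = u * x + v * y"
proof -
  have "c * m \<in> ideal2 x y"
    unfolding ideal2_def using assms(2) by blast
  then have "m \<in> ideal2 x y"
    using assms(1) unfolding weakly_regular_quot_def by blast
  then show ?thesis
    using that unfolding ideal2_def by blast
qed

lemma eta_gamma_eqs_imp_span_entries_decomposed:
  fixes x y a b :: "'a::comm_ring_1"
  assumes pair: "regular_exact_pair x y"
    and r: "r = u * x + v * y" and g: "g = v * y + w * x"
    and eq11: "p * y = x * e + a * g" and eq22: "- r * b + s * x = y * h"
  shows "\<exists>c\<^sub>3 c\<^sub>4. p = c\<^sub>4 * x + v * a \<and> s = u * b + c\<^sub>3 * y"
proof -
  have "(p - a * v) * y = x * (e + a * w)"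
    using eq11 by (simp add: g algebra_simps)
  then have "x dvd (p - a * v) * y"
    by (rule dvdI)
  then have "x dvd p - a * v"
    by (rule regular_exact_pair_dvd_cancel[OF pair])
  then obtain c\<^sub>4 where c4: "p - a * v = x * c\<^sub>4" ..
  have "(s - u * b) * x = y * (h + v * b)"
    using eq22 by (simp add: r algebra_simps)
  then have "y dvd (s - u * b) * x"
    by (rule dvdI)
  then have "y dvd s - u * b"
    by (rule regular_exact_pair_dvd_cancel[OF regular_exact_pair_sym[OF pair]])
  then obtain c\<^sub>3 where c3: "s - u * b = y * c\<^sub>3" ..
  from c4 c3 have "p = c\<^sub>4 * x + v * a" "s = u * b + c\<^sub>3 * y"
    by (simp_all add: diff_eq_eq algebra_simps)
  then show ?thesis
    by blast
qed

lemma eta_gamma_eqs_imp_span_entries: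
  fixes x y a b :: "'a::comm_ring_1"
  assumes pair: "regular_exact_pair x y"
    and weakly_regular: "weakly_regular_quot a (ideal2 x y) \<or> weakly_regular_quot b (ideal2 x y)"
    and eq11: "p * y = x * e + a * g" and eq21: "r * y = y * g" and eq22: "- r * b + s * x = y * h"
  shows "\<exists>c\<^sub>2 c\<^sub>3 c\<^sub>4 c\<^sub>5. p = c\<^sub>4 * x + c\<^sub>5 * a \<and> r = c\<^sub>2 * x + c\<^sub>5 * y \<and> s = c\<^sub>2 * b + c\<^sub>3 * y"
proof -
  have "(g - r) * y = 0"
    using eq21 by (simp add: algebra_simps)
  then have "x dvd (g - r) * y"
    by simp
  then have "x dvd g - r"
    by (rule regular_exact_pair_dvd_cancel[OF pair])
  then obtain t where "g - r = x * t" ..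
  then have t: "g = r + x * t"
    by (simp add: diff_eq_eq add.commute)
  obtain u v where r: "r = u * x + v * y"
    using weakly_regular
  proof
    assume "weakly_regular_quot a (ideal2 x y)"
    moreover have "a * g = (- e) * x + p * y"
      using eq11 by (simp add: algebra_simps)
    ultimately obtain u v where "g = u * x + v * y"
      by (rule weakly_regular_quot_ideal2E)
    with t have "r = (u - t) * x + v * y"
      by (simp add: algebra_simps)
    then show ?thesis by (rule that)
  next
    assume "weakly_regular_quot b (ideal2 x y)"
    moreover have "b * r = s * x + (- h) * y"
      using eq22 by (simp add: algebra_simps)
    ultimately obtain u v where "r = u * x + v * y"
      by (rule weakly_regular_quot_ideal2E)
    then show ?thesis by (rule that)
  qed
  moreover have "g = v * y + (u + t) * x"
    using r t by (simp add: algebra_simps)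
  ultimately show ?thesis
    using eta_gamma_eqs_imp_span_entries_decomposed[OF pair _ _ eq11 eq22] by blast
qed

lemma span_entries_imp_eta_gamma_eqs:
  fixes x y a b :: "'a::comm_ring_1"
  assumes xy: "x * y = 0"
    and "p = c\<^sub>4 * x + c\<^sub>5 * a" "r = c\<^sub>2 * x + c\<^sub>5 * y" "s = c\<^sub>2 * b + c\<^sub>3 * y"
  shows "\<exists>e f g h. p * y = x * e + a * g \<and> - p * b + q * x = x * f + a * h \<and>
                   r * y = y * g \<and> - r * b + s * x = y * h"
proof -
  have "p * y = c\<^sub>4 * (x * y) + a * (c\<^sub>5 * y)" "r * y = c\<^sub>2 * (x * y) + y * (c\<^sub>5 * y)"
       "- r * b + s * x = c\<^sub>3 * (x * y) + y * (- c\<^sub>5 * b)"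
       "- p * b + q * x = x * (q - c\<^sub>4 * b) + a * (- c\<^sub>5 * b)"
    unfolding assms(2-4) by (simp_all add: algebra_simps)
  then show ?thesis
    by (intro exI[of _ 0] exI[of _ "q - c\<^sub>4 * b"] exI[of _ "c\<^sub>5 * y"] exI[of _ "- c\<^sub>5 * b"])
      (simp add: xy)
qed

theorem lemma7p3:
  fixes x y a b :: "'a::comm_ring_1"
  assumes "noetherian_ring TYPE('a)"
    and "local_ring TYPE('a)"
    and "regular_exact_pair x y"
    and "weakly_regular_quot a (ideal2 x y) \<or> weakly_regular_quot b (ideal2 x y)"
  shows "Qset (eta_mat x y b) (gamma_mat x y a) =
         span_mats [mat2 0 1 0 0, mat2 0 0 x b, mat2 0 0 0 y, mat2 x 0 0 0, mat2 a 0 y 0]"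
proof (rule set_eqI)
  fix M :: "'a^2^2"
  obtain p q r s where M: "M = mat2 p q r s"
    by (rule mat2_cases)
  show "M \<in> Qset (eta_mat x y b) (gamma_mat x y a) \<longleftrightarrow>
        M \<in> span_mats [mat2 0 1 0 0, mat2 0 0 x b, mat2 0 0 0 y, mat2 x 0 0 0, mat2 a 0 y 0]"
    unfolding M mat2_in_Qset_eta_gamma_iff mat2_in_span_mats_iff
    using eta_gamma_eqs_imp_span_entries[OF assms(3,4)]
      span_entries_imp_eta_gamma_eqs[OF regular_exact_pair_mult_eq_0[OF assms(3)]]
    by blast
qed

end
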